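(* Let $p\ge q$ and $n\ge 1$ be positive integers and let $B$ be a $p\times q$ matrix. Let $C$ be the $(nq+p)\times(nq+p)$ block matrix $$C=\begin{bmatrix} 0 & B & B & \cdots & B\\ B^T & 0 & I & \cdots & I\\ B^T & I & 0 & \cdots & I\\ \vdots & \vdots & \vdots & \ddots & \vdots\\ B^T & I & I & \cdots & 0\end{bmatrix}$$ (one block of size $p$ followed by $n$ blocks of size $q$), and let $D$ be the $(np+q)\times(np+q)$ block matrix $$D=\begin{bmatrix} 0 & B^T & B^T & \cdots & B^T\\ B & 0 & I & \cdots & I\\ B & I & 0 & \cdots & I\\ \vdots & \vdots & \vdots & \ddots & \vdots\\ B & I & I & \cdots & 0\end{bmatrix}$$ (one block of size $q$ followed by $n$ blocks of size $p$). Then $D\oplus 0_{p-q}$ and $C\oplus\underbrace{(J-I)_n\oplus\cdots\oplus(J-I)_n}_{p-q\text{ times}}$ are cospectral.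
   Context: $I$ denotes an identity matrix and $0$ a zero matrix of appropriate size; $0_m$ is the $m\times m$ zero matrix; $(J-I)_n$ is the $n\times n$ matrix with zeros on the diagonal and ones elsewhere. For matrices $X,Y$, $X\oplus Y=\begin{bmatrix} X&0\\0&Y\end{bmatrix}$. Two square matrices are cospectral if they have the same eigenvalues with the same multiplicities. *)

theory Defs
  imports "Jordan_Normal_Form.Matrix" "Jordan_Normal_Form.Char_Poly"
begin

definition dsum :: "'a::zero mat \<Rightarrow> 'a mat \<Rightarrow> 'a mat" where
  "dsum X Y = four_block_mat X (0\<^sub>m (dim_row X) (dim_col Y)) (0\<^sub>m (dim_row Y) (dim_col X)) Y"

definition JmI :: "nat \<Rightarrow> real mat" where
  "JmI n = mat n n (\<lambda>(i,j). if i = j then 0 else 1)"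

text \<open>Cospectral: square of the same size, and every (complex) eigenvalue has the
  same algebraic multiplicity (root multiplicity in the characteristic polynomial).\<close>
definition cospectral :: "real mat \<Rightarrow> real mat \<Rightarrow> bool" where
  "cospectral X Y \<longleftrightarrow> X \<in> carrier_mat (dim_row X) (dim_row X) \<and>
     Y \<in> carrier_mat (dim_row X) (dim_row X) \<and>
     (\<forall>z::complex. order z (char_poly (map_mat complex_of_real X)) =
                   order z (char_poly (map_mat complex_of_real Y)))"

text \<open>Generic block matrix: one leading block of size a, followed by n blocks of size b.
  Upper-right blocks are M (a x b), lower-left blocks are M^T, diagonal blocks 0,
  off-diagonal blocks among the n b-blocks are identities.\<close>
definition block_mat :: "nat \<Rightarrow> nat \<Rightarrow> nat \<Rightarrow> real mat \<Rightarrow> real mat" where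
  "block_mat n a b M = mat (n*b + a) (n*b + a) (\<lambda>(i,j).
     if i < a \<and> j < a then 0
     else if i < a then M $$ (i, (j - a) mod b)
     else if j < a then M $$ (j, (i - a) mod b)
     else if (i - a) div b = (j - a) div b then 0
     else if (i - a) mod b = (j - a) mod b then 1 else 0)"

definition C_mat :: "nat \<Rightarrow> nat \<Rightarrow> nat \<Rightarrow> real mat \<Rightarrow> real mat" where
  "C_mat n p q B = block_mat n p q B"

definition D_mat :: "nat \<Rightarrow> nat \<Rightarrow> nat \<Rightarrow> real mat \<Rightarrow> real mat" where
  "D_mat n p q B = block_mat n q p (transpose_mat B)"

end

theory Submission
  imports Defs
begin

text \<open>Let E be the vertical stack of n identity matrices of size b. The block matrix with a
  leading block of size a followed by n blocks of size b satisfies block_mat + I = F K with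
  F = diag(I, E) and K = [[I, M E^T], [M^T, E^T]], while K F = [[I, n M], [M^T, n I]] because
  E^T E = n I. Sylvester's determinant identity and a Schur complement therefore reduce its
  characteristic polynomial at y, up to powers of y + 1 and y + 1 - n, to
  det (y (y + 1 - n) I - n M M^T). For C this is a p x p determinant in B B^T, for D a q x q
  determinant in B^T B, and Sylvester's identity relates the two up to (y (y + 1 - n))^(p - q).
  The summand 0_(p-q) contributes y^(p-q) and each copy of (J - I)_n contributes
  (y + 1)^(n-1) (y + 1 - n), which balances the remaining factors. Hence both characteristic
  polynomials agree outside {0, -1, n - 1} and coincide.\<close>

lemma smult_one_mat_mult [simp]:
  "A \<in> carrier_mat m k \<Longrightarrow> (x \<cdot>\<^sub>m 1\<^sub>m m) * A = (x :: 'a :: comm_ring_1) \<cdot>\<^sub>m A"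
  by (rule eq_matI) auto

lemma mult_smult_one_mat [simp]:
  "A \<in> carrier_mat m k \<Longrightarrow> A * (x \<cdot>\<^sub>m 1\<^sub>m k) = (x :: 'a :: comm_ring_1) \<cdot>\<^sub>m A"
  by (rule eq_matI) auto

lemma det_sylvester_identity:
  fixes U V :: "'a :: idom mat"
  assumes U: "U \<in> carrier_mat m k" and V: "V \<in> carrier_mat k m"
  shows "det (x \<cdot>\<^sub>m 1\<^sub>m m - U * V) * x ^ k = x ^ m * det (x \<cdot>\<^sub>m 1\<^sub>m k - V * U)"
proof -
  define N where "N = four_block_mat (x \<cdot>\<^sub>m 1\<^sub>m m) U V (1\<^sub>m k)"
  have N: "N \<in> carrier_mat (m + k) (m + k)"
    using U V by (simp add: N_def)
  define P where "P = four_block_mat (1\<^sub>m m) (0\<^sub>m m k) (- V) (1\<^sub>m k)"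
  define Q where "Q = four_block_mat (1\<^sub>m m) (- U) (0\<^sub>m k m) (x \<cdot>\<^sub>m 1\<^sub>m k)"
  have "det N = det (N * P)"
    using det_mult[OF N, of P] V
    by (simp add: P_def det_four_block_mat_upper_right_zero[of _ m _ k])
  also have "N * P = four_block_mat (x \<cdot>\<^sub>m 1\<^sub>m m - U * V) U (0\<^sub>m k m) (1\<^sub>m k)"
    unfolding N_def P_def using U V
    by (subst mult_four_block_mat[of _ m m _ k _ k _ _ m _ k]) auto
  also have "det \<dots> = det (x \<cdot>\<^sub>m 1\<^sub>m m - U * V)"
    using U V by (subst det_four_block_mat_lower_left_zero[of _ m _ k]) auto
  finally have "det (x \<cdot>\<^sub>m 1\<^sub>m m - U * V) * x ^ k = det (N * Q)"
    using det_mult[OF N, of Q] U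
    by (simp add: Q_def det_four_block_mat_lower_left_zero[of _ m _ k])
  also have "N * Q = four_block_mat (x \<cdot>\<^sub>m 1\<^sub>m m) (0\<^sub>m m k) V (x \<cdot>\<^sub>m 1\<^sub>m k - V * U)"
    unfolding N_def Q_def using U V
    by (subst mult_four_block_mat[of _ m m _ k _ k _ _ m _ k]) auto
  also have "det \<dots> = x ^ m * det (x \<cdot>\<^sub>m 1\<^sub>m k - V * U)"
    using U V by (subst det_four_block_mat_upper_right_zero[of _ m _ k]) auto
  finally show ?thesis .
qed

lemma det_sylvester_identity_nonzero:
  fixes U V :: "'a :: field mat"
  assumes "U \<in> carrier_mat m k" and "V \<in> carrier_mat k m" and "k \<le> m" and "x \<noteq> 0"
  shows "det (x \<cdot>\<^sub>m 1\<^sub>m m - U * V) = x ^ (m - k) * det (x \<cdot>\<^sub>m 1\<^sub>m k - V * U)"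
proof -
  have "det (x \<cdot>\<^sub>m 1\<^sub>m m - U * V) * x ^ k = (x ^ (m - k) * det (x \<cdot>\<^sub>m 1\<^sub>m k - V * U)) * x ^ k"
    using det_sylvester_identity[OF assms(1,2)] \<open>k \<le> m\<close>
    by (simp add: power_add[symmetric] mult_ac)
  then show ?thesis
    using \<open>x \<noteq> 0\<close> by simp
qed

lemma det_four_block_smult_one_diag:
  fixes U V :: "'a :: idom mat"
  assumes U: "U \<in> carrier_mat a b" and V: "V \<in> carrier_mat b a"
  shows "det (four_block_mat (\<alpha> \<cdot>\<^sub>m 1\<^sub>m a) U V (\<beta> \<cdot>\<^sub>m 1\<^sub>m b)) * \<beta> ^ a
       = det ((\<alpha> * \<beta>) \<cdot>\<^sub>m 1\<^sub>m a - U * V) * \<beta> ^ b"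
proof -
  define N where "N = four_block_mat (\<alpha> \<cdot>\<^sub>m 1\<^sub>m a) U V (\<beta> \<cdot>\<^sub>m 1\<^sub>m b)"
  have N: "N \<in> carrier_mat (a + b) (a + b)"
    using U V by (simp add: N_def)
  define P where "P = four_block_mat (\<beta> \<cdot>\<^sub>m 1\<^sub>m a) (0\<^sub>m a b) (- V) (1\<^sub>m b)"
  have "det N * \<beta> ^ a = det (N * P)"
    using det_mult[OF N, of P] V
    by (simp add: P_def det_four_block_mat_upper_right_zero[of _ a _ b])
  also have "N * P = four_block_mat ((\<alpha> * \<beta>) \<cdot>\<^sub>m 1\<^sub>m a - U * V) U (0\<^sub>m b a) (\<beta> \<cdot>\<^sub>m 1\<^sub>m b)"
    unfolding N_def P_def using U V
    by (subst mult_four_block_mat[of _ a a _ b _ b _ _ a _ b]) auto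
  also have "det \<dots> = det ((\<alpha> * \<beta>) \<cdot>\<^sub>m 1\<^sub>m a - U * V) * \<beta> ^ b"
    using U V by (subst det_four_block_mat_lower_left_zero[of _ a _ b]) auto
  finally show ?thesis
    by (simp add: N_def)
qed

lemma poly_char_poly_eq_det:
  assumes "(A :: 'a :: field mat) \<in> carrier_mat n n"
  shows "poly (char_poly A) y = det (y \<cdot>\<^sub>m 1\<^sub>m n - A)"
proof -
  have "- char_matrix A y = y \<cdot>\<^sub>m 1\<^sub>m n - A"
    using assms by (auto simp: char_matrix_def)
  then show ?thesis
    using char_poly_matrix[OF assms] by simp
qed

lemma dsum_carrier:
  "A \<in> carrier_mat r c \<Longrightarrow> B \<in> carrier_mat r' c' \<Longrightarrow> dsum A B \<in> carrier_mat (r + r') (c + c')"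
  by (simp add: dsum_def)

lemma char_poly_dsum:
  fixes A B :: "'a :: idom mat"
  assumes A: "A \<in> carrier_mat r r" and B: "B \<in> carrier_mat s s"
  shows "char_poly (dsum A B) = char_poly A * char_poly B"
proof -
  have "char_poly_matrix (dsum A B)
      = four_block_mat (char_poly_matrix A) (0\<^sub>m r s) (0\<^sub>m s r) (char_poly_matrix B)"
    using A B by (intro eq_matI) (auto simp: dsum_def char_poly_matrix_def)
  then show ?thesis
    unfolding char_poly_def using A B
    by (simp add: det_four_block_mat_upper_right_zero[of _ r _ s])
qed

lemma char_poly_zero_mat: "char_poly (0\<^sub>m n n :: 'a :: idom mat) = [:0, 1:] ^ n"
proof -
  have "char_poly_matrix (0\<^sub>m n n :: 'a mat) = [:0, 1:] \<cdot>\<^sub>m 1\<^sub>m n"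
    by (intro eq_matI) (auto simp: char_poly_matrix_def)
  then show ?thesis
    by (simp add: char_poly_def)
qed

lemma diag_block_mat_replicate_carrier:
  "A \<in> carrier_mat m m \<Longrightarrow> diag_block_mat (replicate k A) \<in> carrier_mat (k * m) (k * m)"
  by (induction k) (auto simp: Let_def)

lemma char_poly_diag_block_mat_replicate:
  fixes A :: "'a :: idom mat"
  assumes A: "A \<in> carrier_mat m m"
  shows "char_poly (diag_block_mat (replicate k A)) = char_poly A ^ k"
proof (induction k)
  case 0
  show ?case
    using char_poly_zero_mat[of 0] by simp
next
  case (Suc k)
  have "diag_block_mat (replicate (Suc k) A) = dsum A (diag_block_mat (replicate k A))"
    by (simp add: dsum_def Let_def)
  then show ?case
    using Suc A by (simp add: char_poly_dsum[OF A diag_block_mat_replicate_carrier[OF A]])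
qed

lemma poly_eqI_cofinite:
  fixes p q :: "'a :: {idom, ring_char_0} poly"
  assumes "finite S" and "\<And>y. y \<notin> S \<Longrightarrow> poly p y = poly q y"
  shows "p = q"
proof (rule ccontr)
  assume "p \<noteq> q"
  then have "finite {y. poly (p - q) y = 0}"
    by (intro poly_roots_finite) simp
  moreover have "- S \<subseteq> {y. poly (p - q) y = 0}"
    using assms(2) by auto
  ultimately have "finite (UNIV :: 'a set)"
    using \<open>finite S\<close> by (metis finite_Un finite_subset Compl_partition)
  then show False
    using infinite_UNIV_char_0 by blast
qed

lemma cospectral_if_char_poly_eq:
  assumes "X \<in> carrier_mat n n" and "Y \<in> carrier_mat n n" and "char_poly X = char_poly Y"
  shows "cospectral X Y"
  using assms by (simp add: cospectral_def of_real_hom.char_poly_hom)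

definition stacked_one_mat :: "nat \<Rightarrow> nat \<Rightarrow> 'a :: zero_neq_one mat" where
  "stacked_one_mat n b = mat (n * b) b (\<lambda>(i, j). if i mod b = j then 1 else 0)"

lemma dim_stacked_one_mat [simp]:
  "dim_row (stacked_one_mat n b) = n * b" "dim_col (stacked_one_mat n b) = b"
  by (simp_all add: stacked_one_mat_def)

lemma stacked_one_mat_carrier [simp]: "stacked_one_mat n b \<in> carrier_mat (n * b) b"
  by (simp add: stacked_one_mat_def)

lemma index_stacked_one_mat [simp]:
  "i < n * b \<Longrightarrow> j < b \<Longrightarrow> stacked_one_mat n b $$ (i, j) = (if i mod b = j then 1 else 0)"
  by (simp add: stacked_one_mat_def)

lemma sum_mod_periodic:
  fixes f :: "nat \<Rightarrow> 'a :: comm_semiring_1"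
  shows "(\<Sum>k = 0..<n * b. f (k mod b)) = of_nat n * (\<Sum>r = 0..<b. f r)"
proof (induction n)
  case 0
  then show ?case by simp
next
  case (Suc n)
  have "(\<Sum>k = n * b..<n * b + b. f (k mod b)) = (\<Sum>r = 0..<b. f r)"
    using sum.shift_bounds_nat_ivl[of "\<lambda>k. f (k mod b)" 0 "n * b" b]
    by (simp add: add.commute)
  then show ?case
    using Suc sum.atLeastLessThan_concat[of 0 "n * b" "n * b + b" "\<lambda>k. f (k mod b)"]
    by (simp add: add.commute distrib_right)
qed

lemma transpose_stacked_one_mat_mult_self:
  "transpose_mat (stacked_one_mat n b) * stacked_one_mat n b = (of_nat n :: 'a :: comm_ring_1) \<cdot>\<^sub>m 1\<^sub>m b"
proof (rule eq_matI)
  fix i j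
  assume "i < dim_row (of_nat n \<cdot>\<^sub>m 1\<^sub>m b :: 'a mat)" "j < dim_col (of_nat n \<cdot>\<^sub>m 1\<^sub>m b :: 'a mat)"
  then have i: "i < b" and j: "j < b" by auto
  have "(transpose_mat (stacked_one_mat n b) * stacked_one_mat n b) $$ (i, j)
      = (\<Sum>k = 0..<n * b. (if k mod b = i then 1 else 0) * (if k mod b = j then 1 else 0 :: 'a))"
    using i j by (simp add: scalar_prod_def stacked_one_mat_def)
  also have "\<dots> = of_nat n * (\<Sum>r = 0..<b. (if r = i then 1 else 0) * (if r = j then 1 else 0))"
    by (rule sum_mod_periodic)
  also have "\<dots> = (of_nat n \<cdot>\<^sub>m 1\<^sub>m b :: 'a mat) $$ (i, j)"
    using i j by (simp add: if_distrib[of "times _"] cong: if_cong)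
  finally show "(transpose_mat (stacked_one_mat n b) * stacked_one_mat n b) $$ (i, j)
      = (of_nat n \<cdot>\<^sub>m 1\<^sub>m b :: 'a mat) $$ (i, j)" .
qed auto

lemma index_mult_transpose_stacked_one_mat:
  fixes M :: "'a :: comm_ring_1 mat"
  assumes "M \<in> carrier_mat a b" and "i < a" and "j < n * b"
  shows "(M * transpose_mat (stacked_one_mat n b)) $$ (i, j) = M $$ (i, j mod b)"
proof -
  have "b > 0"
    using \<open>j < n * b\<close> by (cases b) auto
  then show ?thesis
    using assms by (simp add: scalar_prod_def stacked_one_mat_def if_distrib[of "times _"] cong: if_cong)
qed

lemma index_stacked_one_mat_mult_transpose:
  fixes M :: "'a :: comm_ring_1 mat"
  assumes "M \<in> carrier_mat a b" and "i < n * b" and "j < a"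
  shows "(stacked_one_mat n b * transpose_mat M) $$ (i, j) = M $$ (j, i mod b)"
proof -
  have "b > 0"
    using \<open>i < n * b\<close> by (cases b) auto
  then show ?thesis
    using assms by (simp add: scalar_prod_def stacked_one_mat_def if_distrib[of "\<lambda>x. x * _"] cong: if_cong)
qed

lemma block_mat_carrier: "block_mat n a b M \<in> carrier_mat (n * b + a) (n * b + a)"
  by (simp add: block_mat_def)

lemma div_mod_eq_imp_eq: "(i :: nat) div b = j div b \<Longrightarrow> i mod b = j mod b \<Longrightarrow> i = j"
  by (metis div_mult_mod_eq)

lemma block_mat_plus_one_factorization:
  assumes M: "M \<in> carrier_mat a b"
  shows "block_mat n a b M + 1\<^sub>m (n * b + a)
       = four_block_mat (1\<^sub>m a) (0\<^sub>m a b) (0\<^sub>m (n * b) a) (stacked_one_mat n b)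
       * four_block_mat (1\<^sub>m a) (M * transpose_mat (stacked_one_mat n b)) (transpose_mat M)
           (transpose_mat (stacked_one_mat n b))"
    (is "_ = ?F * ?K")
proof -
  let ?E = "stacked_one_mat n b :: real mat"
  have "?F * ?K = four_block_mat (1\<^sub>m a) (M * transpose_mat ?E) (?E * transpose_mat M) (?E * transpose_mat ?E)"
    using M by (subst mult_four_block_mat[of _ a a _ b _ "n * b" _ _ a _ "n * b"]) auto
  also have "\<dots> = block_mat n a b M + 1\<^sub>m (n * b + a)"
  proof (rule eq_matI)
    fix i j assume "i < dim_row (block_mat n a b M + 1\<^sub>m (n * b + a))"
      and "j < dim_col (block_mat n a b M + 1\<^sub>m (n * b + a))"
    then have i: "i < n * b + a" and j: "j < n * b + a"
      by (auto simp: block_mat_def)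
    show "four_block_mat (1\<^sub>m a) (M * transpose_mat ?E) (?E * transpose_mat M) (?E * transpose_mat ?E) $$ (i, j)
        = (block_mat n a b M + 1\<^sub>m (n * b + a)) $$ (i, j)"
    proof (cases "i < a"; cases "j < a")
      assume "i < a" "j < a"
      then show ?thesis using i j by (simp add: block_mat_def)
    next
      assume "i < a" "\<not> j < a"
      then show ?thesis
        using i j by (simp add: block_mat_def index_mult_transpose_stacked_one_mat[OF M] del: index_mult_mat(1))
    next
      assume "\<not> i < a" "j < a"
      then show ?thesis
        using i j by (simp add: block_mat_def index_stacked_one_mat_mult_transpose[OF M] del: index_mult_mat(1))
    next
      assume "\<not> i < a" "\<not> j < a"
      moreover from this i have "b > 0"
        by (cases b) auto
      ultimately show ?thesis
        using i j div_mod_eq_imp_eq[of "i - a" b "j - a"]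
        by (auto simp: block_mat_def index_stacked_one_mat_mult_transpose[OF stacked_one_mat_carrier]
            simp del: index_mult_mat(1))
    qed
  qed (auto simp: block_mat_def)
  finally show ?thesis ..
qed

lemma block_mat_factors_mult_swap:
  assumes M: "M \<in> carrier_mat a b"
  shows "four_block_mat (1\<^sub>m a) (M * transpose_mat (stacked_one_mat n b)) (transpose_mat M)
           (transpose_mat (stacked_one_mat n b))
       * four_block_mat (1\<^sub>m a) (0\<^sub>m a b) (0\<^sub>m (n * b) a) (stacked_one_mat n b)
       = four_block_mat (1\<^sub>m a) (real n \<cdot>\<^sub>m M) (transpose_mat M) (real n \<cdot>\<^sub>m 1\<^sub>m b)"
proof -
  let ?E = "stacked_one_mat n b :: real mat"
  have "M * transpose_mat ?E * ?E = real n \<cdot>\<^sub>m M"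
    using M by (simp add: assoc_mult_mat[of M a b _ "n * b" _ b] transpose_stacked_one_mat_mult_self)
  then show ?thesis
    using M by (subst mult_four_block_mat[of _ a a _ "n * b" _ b _ _ a _ b])
      (auto simp: transpose_stacked_one_mat_mult_self)
qed

lemma poly_char_poly_block_mat:
  assumes M: "M \<in> carrier_mat a b" and y: "y + 1 \<noteq> 0"
  shows "poly (char_poly (block_mat n a b M)) y * (y + 1) ^ b * (y + 1 - real n) ^ a
       = (y + 1) ^ (n * b) * (y + 1 - real n) ^ b
         * det ((y * (y + 1 - real n)) \<cdot>\<^sub>m 1\<^sub>m a - real n \<cdot>\<^sub>m (M * transpose_mat M))"
proof -
  define x where "x = y + 1"
  define F :: "real mat" where "F = four_block_mat (1\<^sub>m a) (0\<^sub>m a b) (0\<^sub>m (n * b) a) (stacked_one_mat n b)"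
  define K where "K = four_block_mat (1\<^sub>m a) (M * transpose_mat (stacked_one_mat n b)) (transpose_mat M)
    (transpose_mat (stacked_one_mat n b))"
  have F: "F \<in> carrier_mat (n * b + a) (a + b)"
    by (simp add: F_def add.commute)
  have K: "K \<in> carrier_mat (a + b) (n * b + a)"
    using M by (simp add: K_def add.commute)
  define \<Delta> where "\<Delta> = det ((y * (y + 1 - real n)) \<cdot>\<^sub>m 1\<^sub>m a - real n \<cdot>\<^sub>m (M * transpose_mat M))"
  have char: "poly (char_poly (block_mat n a b M)) y = det (x \<cdot>\<^sub>m 1\<^sub>m (n * b + a) - F * K)"
  proof -
    have "y \<cdot>\<^sub>m 1\<^sub>m (n * b + a) - block_mat n a b M
        = x \<cdot>\<^sub>m 1\<^sub>m (n * b + a) - (block_mat n a b M + 1\<^sub>m (n * b + a))"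
      by (intro eq_matI) (auto simp: x_def block_mat_def)
    then show ?thesis
      by (simp add: poly_char_poly_eq_det[OF block_mat_carrier] block_mat_plus_one_factorization[OF M] F_def K_def)
  qed
  have sylvester: "det (x \<cdot>\<^sub>m 1\<^sub>m (n * b + a) - F * K) * x ^ (a + b)
      = x ^ (n * b + a) * det (x \<cdot>\<^sub>m 1\<^sub>m (a + b) - K * F)"
    by (rule det_sylvester_identity[OF F K])
  have schur: "det (x \<cdot>\<^sub>m 1\<^sub>m (a + b) - K * F) * (x - real n) ^ a = \<Delta> * (x - real n) ^ b"
  proof -
    have "x \<cdot>\<^sub>m 1\<^sub>m (a + b) - K * F
        = four_block_mat (y \<cdot>\<^sub>m 1\<^sub>m a) (- (real n \<cdot>\<^sub>m M)) (- transpose_mat M) ((x - real n) \<cdot>\<^sub>m 1\<^sub>m b)"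
      unfolding K_def F_def block_mat_factors_mult_swap[OF M] using M by (intro eq_matI) (auto simp: x_def)
    moreover have "(- (real n \<cdot>\<^sub>m M)) * (- transpose_mat M) = real n \<cdot>\<^sub>m (M * transpose_mat M)"
      using M by (intro eq_matI) auto
    ultimately show ?thesis
      using det_four_block_smult_one_diag[of "- (real n \<cdot>\<^sub>m M)" a b "- transpose_mat M"] M
      by (simp add: \<Delta>_def x_def)
  qed
  have "(poly (char_poly (block_mat n a b M)) y * x ^ b * (x - real n) ^ a) * x ^ a
      = det (x \<cdot>\<^sub>m 1\<^sub>m (n * b + a) - F * K) * x ^ (a + b) * (x - real n) ^ a"
    by (simp add: char power_add mult_ac)
  also have "\<dots> = x ^ (n * b + a) * (det (x \<cdot>\<^sub>m 1\<^sub>m (a + b) - K * F) * (x - real n) ^ a)"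
    by (simp only: sylvester mult.assoc)
  also have "\<dots> = (x ^ (n * b) * (x - real n) ^ b * \<Delta>) * x ^ a"
    unfolding schur by (simp add: power_add mult_ac)
  finally show ?thesis
    using y by (simp add: x_def \<Delta>_def)
qed

lemma poly_char_poly_JmI:
  assumes "y + 1 \<noteq> 0"
  shows "poly (char_poly (JmI n)) y * (y + 1) = (y + 1) ^ n * (y + 1 - real n)"
proof -
  have "JmI n = block_mat n 0 1 (0\<^sub>m 0 1)"
    by (auto intro!: eq_matI simp: JmI_def block_mat_def)
  moreover have "det (z \<cdot>\<^sub>m 1\<^sub>m 0 - 0\<^sub>m 0 0 :: real mat) = 1" for z
    by (rule det_dim_zero) auto
  ultimately show ?thesis
    using poly_char_poly_block_mat[of "0\<^sub>m 0 1" 0 1 y n] assms by simp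
qed

lemma poly_char_poly_D_mat_C_mat:
  assumes B: "B \<in> carrier_mat p q" and "q \<le> p"
    and y: "y \<noteq> 0" "y + 1 \<noteq> 0" "y + 1 \<noteq> real n"
  shows "poly (char_poly (D_mat n p q B)) y * y ^ (p - q)
       = poly (char_poly (C_mat n p q B)) y * poly (char_poly (JmI n)) y ^ (p - q)"
proof -
  define d where "d = p - q"
  have p: "p = q + d"
    using \<open>q \<le> p\<close> by (simp add: d_def)
  define x where "x = y + 1"
  define s where "s = x - real n"
  define c where "c = y * s"
  have "x \<noteq> 0" "s \<noteq> 0" "c \<noteq> 0"
    using y by (auto simp: x_def s_def c_def)
  define \<chi>C where "\<chi>C = poly (char_poly (C_mat n p q B)) y"
  define \<chi>D where "\<chi>D = poly (char_poly (D_mat n p q B)) y"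
  define \<chi>J where "\<chi>J = poly (char_poly (JmI n)) y"
  define \<Delta>p where "\<Delta>p = det (c \<cdot>\<^sub>m 1\<^sub>m p - real n \<cdot>\<^sub>m (B * transpose_mat B))"
  define \<Delta>q where "\<Delta>q = det (c \<cdot>\<^sub>m 1\<^sub>m q - real n \<cdot>\<^sub>m (transpose_mat B * B))"
  have C: "\<chi>C * x ^ q * s ^ p = x ^ (n * q) * s ^ q * \<Delta>p"
    using poly_char_poly_block_mat[OF B y(2), of n]
    by (simp add: \<chi>C_def C_mat_def \<Delta>p_def c_def s_def x_def)
  have D: "\<chi>D * x ^ p * s ^ q = x ^ (n * p) * s ^ p * \<Delta>q"
    using poly_char_poly_block_mat[of "transpose_mat B" q p y n] B y(2)
    by (simp add: \<chi>D_def D_mat_def \<Delta>q_def c_def s_def x_def)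
  have J: "\<chi>J * x = x ^ n * s"
    using poly_char_poly_JmI[OF y(2)] by (simp add: \<chi>J_def s_def x_def)
  have "(real n \<cdot>\<^sub>m B) * transpose_mat B = real n \<cdot>\<^sub>m (B * transpose_mat B)"
    "transpose_mat B * (real n \<cdot>\<^sub>m B) = real n \<cdot>\<^sub>m (transpose_mat B * B)"
    using B by (auto simp: mult_smult_distrib)
  then have \<Delta>: "\<Delta>p = c ^ d * \<Delta>q"
    using det_sylvester_identity_nonzero[of "real n \<cdot>\<^sub>m B" p q "transpose_mat B" c] B \<open>q \<le> p\<close> \<open>c \<noteq> 0\<close>
    by (simp add: \<Delta>p_def \<Delta>q_def d_def)
  have "\<chi>D * y ^ d * (x ^ p * s ^ p) = (\<chi>D * x ^ p * s ^ q) * c ^ d"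
    by (simp add: p c_def power_add power_mult_distrib mult_ac)
  also have "\<dots> = x ^ (n * p) * s ^ p * \<Delta>p"
    unfolding D \<Delta> by (simp add: mult_ac)
  also have "\<dots> = (\<chi>C * x ^ q * s ^ p) * (\<chi>J * x) ^ d"
  proof -
    have "x ^ (n * p) = x ^ (n * q) * (x ^ n) ^ d"
      by (simp add: p distrib_left power_add power_mult)
    then show ?thesis
      unfolding C J \<Delta> by (simp add: p c_def power_add power_mult_distrib mult_ac)
  qed
  also have "\<dots> = \<chi>C * \<chi>J ^ d * (x ^ p * s ^ p)"
    by (simp add: p power_add power_mult_distrib mult_ac)
  finally show ?thesis
    using \<open>x \<noteq> 0\<close> \<open>s \<noteq> 0\<close> by (simp add: \<chi>C_def \<chi>D_def \<chi>J_def d_def)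
qed

theorem theorem3p15:
  fixes n p q :: nat and B :: "real mat"
  assumes "q \<ge> 1" and "p \<ge> q" and "n \<ge> 1" and "B \<in> carrier_mat p q"
  shows "cospectral (dsum (D_mat n p q B) (0\<^sub>m (p - q) (p - q)))
                    (dsum (C_mat n p q B) (diag_block_mat (replicate (p - q) (JmI n))))"
proof -
  define d where "d = p - q"
  have D: "D_mat n p q B \<in> carrier_mat (n * p + q) (n * p + q)"
    by (simp add: D_mat_def block_mat_carrier)
  have C: "C_mat n p q B \<in> carrier_mat (n * q + p) (n * q + p)"
    by (simp add: C_mat_def block_mat_carrier)
  have J: "JmI n \<in> carrier_mat n n"
    by (simp add: JmI_def)
  note Js = diag_block_mat_replicate_carrier[OF J, of d]
  have "n * q + p + d * n = n * p + q + d"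
    using \<open>p \<ge> q\<close> by (simp add: d_def algebra_simps)
  moreover have "char_poly (dsum (D_mat n p q B) (0\<^sub>m d d))
      = char_poly (dsum (C_mat n p q B) (diag_block_mat (replicate d (JmI n))))"
  proof (rule poly_eqI_cofinite[of "{0, -1, real n - 1}"])
    fix y :: real
    assume "y \<notin> {0, -1, real n - 1}"
    then have "y \<noteq> 0" "y + 1 \<noteq> 0" "y + 1 \<noteq> real n"
      by auto
    from poly_char_poly_D_mat_C_mat[OF assms(4,2) this]
    show "poly (char_poly (dsum (D_mat n p q B) (0\<^sub>m d d))) y
        = poly (char_poly (dsum (C_mat n p q B) (diag_block_mat (replicate d (JmI n))))) y"
      by (simp add: d_def[symmetric] char_poly_dsum[OF D zero_carrier_mat] char_poly_dsum[OF C Js]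
          char_poly_zero_mat char_poly_diag_block_mat_replicate[OF J])
  qed simp
  ultimately show ?thesis
    unfolding d_def[symmetric]
    using dsum_carrier[OF D, of "0\<^sub>m d d" d d] dsum_carrier[OF C Js]
    by (intro cospectral_if_char_poly_eq[of _ "n * p + q + d"]) auto
qed

end
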